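(* Let $n\ge 2$ and let $T_n^{op}$ be the monoid of all maps $f\colon[n]\to[n]$ with product $(fg)(i)=f(g(i))$ (the opposite of the full transformation monoid $T_n$). Let $X$ be a faithful right $T_n^{op}$-set (action by total maps). Then $X$ contains a $T_n^{op}$-invariant subset isomorphic, as a right $T_n^{op}$-set, to the power set $2^{[n]}$ with action $A\cdot f=f^{-1}(A)$. Consequently, the minimal degree of a faithful action of $T_n^{op}$ by total transformations on the right is $2^n$.
   Context: $[n]=\{1,\dots,n\}$. A right $M$-set for a monoid $M$ is a set $X$ with a map $X\times M\to X$ satisfying $(xf)g=x(fg)$; it is faithful if distinct elements of $M$ act as distinct maps. The minimal degree is the least cardinality of a faithful right $T_n^{op}$-set. *)

theory Defs
  imports "HOL-Library.FuncSet"
begin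

text \<open>The carrier of T_n^op: all maps [n] -> [n], represented extensionally
  (value undefined outside {1..n}).\<close>
definition Tn :: "nat \<Rightarrow> (nat \<Rightarrow> nat) set" where
  "Tn n = {1..n} \<rightarrow>\<^sub>E {1..n}"

definition tmul :: "nat \<Rightarrow> (nat \<Rightarrow> nat) \<Rightarrow> (nat \<Rightarrow> nat) \<Rightarrow> (nat \<Rightarrow> nat)" where
  "tmul n f g = restrict (f \<circ> g) {1..n}"

definition right_act_set :: "nat \<Rightarrow> 'x set \<Rightarrow> ('x \<Rightarrow> (nat \<Rightarrow> nat) \<Rightarrow> 'x) \<Rightarrow> bool" where
  "right_act_set n X act \<longleftrightarrow>
     (\<forall>x\<in>X. \<forall>f\<in>Tn n. act x f \<in> X) \<and>
     (\<forall>x\<in>X. \<forall>f\<in>Tn n. \<forall>g\<in>Tn n. act (act x f) g = act x (tmul n f g))"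

definition faithful_on :: "nat \<Rightarrow> 'x set \<Rightarrow> ('x \<Rightarrow> (nat \<Rightarrow> nat) \<Rightarrow> 'x) \<Rightarrow> bool" where
  "faithful_on n X act \<longleftrightarrow>
     (\<forall>f\<in>Tn n. \<forall>g\<in>Tn n. (\<forall>x\<in>X. act x f = act x g) \<longrightarrow> f = g)"

definition pow_act :: "nat \<Rightarrow> nat set \<Rightarrow> (nat \<Rightarrow> nat) \<Rightarrow> nat set" where
  "pow_act n A f = {i \<in> {1..n}. f i \<in> A}"

text \<open>Minimal degree: least cardinality of a (finite) faithful right T_n^op-set.
  Carriers are taken inside nat, which loses nothing for finite sets.\<close>
definition min_degree :: "nat \<Rightarrow> nat" where
  "min_degree n = (LEAST k. \<exists>(Z::nat set) (\<alpha>::nat \<Rightarrow> (nat \<Rightarrow> nat) \<Rightarrow> nat).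
      finite Z \<and> card Z = k \<and> right_act_set n Z \<alpha> \<and> faithful_on n Z \<alpha>)"

end

theory Submission
  imports Defs
begin

text \<open>Faithfulness yields a point x on which the constant maps c_1 and c_2 act
  differently. For B a subset of [n] let chi_B : [n] -> {1,2} send B to 1 and its complement
  to 2. In T_n^op we have chi_B f = chi_(f^-1(B)), so B |-> x chi_B is equivariant, and
  chi_B c_i is c_1 or c_2 according as i is in B or not, so x chi_B determines B. Hence every
  faithful right T_n^op-set has at least 2^n points; the power set itself is faithful
  because the singletons already separate maps.\<close>

definition const_map :: "nat \<Rightarrow> nat \<Rightarrow> (nat \<Rightarrow> nat)" where
  "const_map n j = restrict (\<lambda>_. j) {1..n}"

definition char_map :: "nat \<Rightarrow> nat set \<Rightarrow> (nat \<Rightarrow> nat)" where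
  "char_map n B = restrict (\<lambda>i. if i \<in> B then 1 else 2) {1..n}"

lemma const_map_in_Tn: "j \<in> {1..n} \<Longrightarrow> const_map n j \<in> Tn n"
  unfolding Tn_def const_map_def by auto

lemma const_map_inj:
  assumes "n \<ge> 1" and "const_map n i = const_map n j"
  shows "i = j"
proof -
  have "const_map n i 1 = const_map n j 1" using assms(2) by simp
  then show ?thesis using assms(1) by (simp add: const_map_def)
qed

lemma char_map_in_Tn: "n \<ge> 2 \<Longrightarrow> char_map n B \<in> Tn n"
  unfolding Tn_def char_map_def by auto

lemma tmul_char_map:
  assumes "f \<in> Tn n"
  shows "tmul n (char_map n B) f = char_map n (pow_act n B f)"
  using assms unfolding tmul_def char_map_def pow_act_def Tn_def
  by (auto simp: PiE_iff)

lemma tmul_char_map_const_map: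
  assumes "i \<in> {1..n}"
  shows "tmul n (char_map n B) (const_map n i) = const_map n (if i \<in> B then 1 else 2)"
  using assms unfolding tmul_def char_map_def const_map_def by auto

lemma pow_act_in_Pow: "pow_act n A f \<in> Pow {1..n}"
  unfolding pow_act_def by auto

lemma pow_act_tmul:
  assumes "g \<in> Tn n"
  shows "pow_act n (pow_act n A f) g = pow_act n A (tmul n f g)"
  using assms unfolding pow_act_def tmul_def Tn_def by (auto simp: PiE_iff)

lemma right_act_set_closed:
  "right_act_set n X act \<Longrightarrow> x \<in> X \<Longrightarrow> f \<in> Tn n \<Longrightarrow> act x f \<in> X"
  unfolding right_act_set_def by blast

lemma right_act_set_assoc:
  "right_act_set n X act \<Longrightarrow> x \<in> X \<Longrightarrow> f \<in> Tn n \<Longrightarrow> g \<in> Tn n \<Longrightarrow>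
    act (act x f) g = act x (tmul n f g)"
  unfolding right_act_set_def by blast

lemma right_act_set_pow_act: "right_act_set n (Pow {1..n}) (pow_act n)"
  unfolding right_act_set_def using pow_act_in_Pow pow_act_tmul by blast

lemma faithful_on_pow_act: "faithful_on n (Pow {1..n}) (pow_act n)"
  unfolding faithful_on_def
proof (intro ballI impI)
  fix f g assume f: "f \<in> Tn n" and g: "g \<in> Tn n"
    and eq: "\<forall>A\<in>Pow {1..n}. pow_act n A f = pow_act n A g"
  have "g i = f i" if i: "i \<in> {1..n}" for i
  proof -
    have "{f i} \<in> Pow {1..n}" using f i unfolding Tn_def by auto
    then have "pow_act n {f i} f = pow_act n {f i} g" using eq by blast
    moreover have "i \<in> pow_act n {f i} f" using i by (simp add: pow_act_def)
    ultimately have "i \<in> pow_act n {f i} g" by simp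
    then show ?thesis unfolding pow_act_def by blast
  qed
  then show "f = g" using f g unfolding Tn_def by (metis PiE_ext)
qed

lemma faithful_on_separates_const_maps:
  assumes "n \<ge> 2" and "faithful_on n X act"
  obtains x where "x \<in> X" and "act x (const_map n 1) \<noteq> act x (const_map n 2)"
proof -
  have "const_map n 1 \<in> Tn n" "const_map n 2 \<in> Tn n"
    using assms(1) by (auto intro: const_map_in_Tn)
  moreover have "const_map n 1 \<noteq> const_map n 2"
    using assms(1) const_map_inj[of n 1 2] by auto
  ultimately show ?thesis using assms(2) that unfolding faithful_on_def by blast
qed

lemma act_char_map_pow_act:
  assumes "n \<ge> 2" and "right_act_set n X act" and "x \<in> X" and "f \<in> Tn n"
  shows "act x (char_map n (pow_act n B f)) = act (act x (char_map n B)) f"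
  using assms by (simp add: right_act_set_assoc char_map_in_Tn tmul_char_map)

lemma inj_on_act_char_map:
  assumes "n \<ge> 2" and "right_act_set n X act" and "x \<in> X"
    and sep: "act x (const_map n 1) \<noteq> act x (const_map n 2)"
  shows "inj_on (\<lambda>B. act x (char_map n B)) (Pow {1..n})"
proof (rule inj_onI)
  fix B C assume B: "B \<in> Pow {1..n}" and C: "C \<in> Pow {1..n}"
    and eq: "act x (char_map n B) = act x (char_map n C)"
  have "i \<in> B \<longleftrightarrow> i \<in> C" if i: "i \<in> {1..n}" for i
  proof -
    have "act x (const_map n (if i \<in> B then 1 else 2)) =
        act (act x (char_map n B)) (const_map n i)"
      using assms(1-3) i
      by (simp add: right_act_set_assoc char_map_in_Tn const_map_in_Tn tmul_char_map_const_map)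
    also have "\<dots> = act x (const_map n (if i \<in> C then 1 else 2))"
      using assms(1-3) i eq
      by (simp add: right_act_set_assoc char_map_in_Tn const_map_in_Tn tmul_char_map_const_map)
    finally show ?thesis using sep by (auto split: if_splits)
  qed
  then show "B = C" using B C by blast
qed

lemma pow_act_embeds_into_faithful:
  fixes X :: "'x set"
  assumes "n \<ge> 2" and "right_act_set n X act" and "faithful_on n X act"
  shows "\<exists>Y (\<phi>::nat set \<Rightarrow> 'x). Y \<subseteq> X \<and> (\<forall>y\<in>Y. \<forall>f\<in>Tn n. act y f \<in> Y) \<and>
            bij_betw \<phi> (Pow {1..n}) Y \<and>
            (\<forall>A\<in>Pow {1..n}. \<forall>f\<in>Tn n. \<phi> (pow_act n A f) = act (\<phi> A) f)"
proof -
  obtain x where x: "x \<in> X" "act x (const_map n 1) \<noteq> act x (const_map n 2)"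
    using faithful_on_separates_const_maps assms(1,3) by blast
  define \<phi> where "\<phi> B = act x (char_map n B)" for B
  have equivariant: "\<phi> (pow_act n A f) = act (\<phi> A) f" if "f \<in> Tn n" for A f
    unfolding \<phi>_def by (rule act_char_map_pow_act[OF assms(1,2) x(1) that])
  have "\<phi> B \<in> X" for B
    unfolding \<phi>_def by (rule right_act_set_closed[OF assms(2) x(1) char_map_in_Tn[OF assms(1)]])
  then have "\<phi> ` Pow {1..n} \<subseteq> X" by blast
  moreover have "\<forall>y\<in>\<phi> ` Pow {1..n}. \<forall>f\<in>Tn n. act y f \<in> \<phi> ` Pow {1..n}"
    using pow_act_in_Pow by (auto simp flip: equivariant)
  moreover have "bij_betw \<phi> (Pow {1..n}) (\<phi> ` Pow {1..n})"
    unfolding bij_betw_def \<phi>_def using inj_on_act_char_map[OF assms(1,2) x] by simp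
  ultimately show ?thesis
    using equivariant by (intro exI[of _ "\<phi> ` Pow {1..n}"] exI[of _ \<phi>]) blast
qed

lemma right_act_set_transfer:
  assumes e: "bij_betw e X Z" and X: "right_act_set n X act"
  shows "right_act_set n Z (\<lambda>z f. e (act (inv_into X e z) f))"
  unfolding right_act_set_def
proof (intro conjI ballI)
  fix z f assume z: "z \<in> Z" and f: "f \<in> Tn n"
  have x: "inv_into X e z \<in> X" using bij_betwE[OF bij_betw_inv_into[OF e]] z by blast
  show "e (act (inv_into X e z) f) \<in> Z"
    using bij_betwE[OF e] right_act_set_closed[OF X x f] by blast
  fix g assume g: "g \<in> Tn n"
  have "inv_into X e (e (act (inv_into X e z) f)) = act (inv_into X e z) f"
    using inv_into_f_f[OF bij_betw_imp_inj_on[OF e] right_act_set_closed[OF X x f]] .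
  then show "e (act (inv_into X e (e (act (inv_into X e z) f))) g) =
      e (act (inv_into X e z) (tmul n f g))"
    using right_act_set_assoc[OF X x f g] by simp
qed

lemma faithful_on_transfer:
  assumes e: "bij_betw e X Z" and X: "right_act_set n X act" "faithful_on n X act"
  shows "faithful_on n Z (\<lambda>z f. e (act (inv_into X e z) f))"
  unfolding faithful_on_def
proof (intro ballI impI)
  fix f g assume f: "f \<in> Tn n" and g: "g \<in> Tn n"
    and eq: "\<forall>z\<in>Z. e (act (inv_into X e z) f) = e (act (inv_into X e z) g)"
  have "act x f = act x g" if x: "x \<in> X" for x
  proof -
    have "e x \<in> Z" using bij_betwE[OF e] x by blast
    moreover have "inv_into X e (e x) = x"
      using inv_into_f_f[OF bij_betw_imp_inj_on[OF e] x] .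
    ultimately have "e (act x f) = e (act x g)" using eq by force
    then show ?thesis
      using inj_onD[OF bij_betw_imp_inj_on[OF e]]
        right_act_set_closed[OF X(1) x f] right_act_set_closed[OF X(1) x g] by blast
  qed
  then show "f = g" using X(2) f g unfolding faithful_on_def by blast
qed

lemma ex_faithful_nat_action_card_2_pow:
  "\<exists>(Z::nat set) (\<alpha>::nat \<Rightarrow> (nat \<Rightarrow> nat) \<Rightarrow> nat).
      finite Z \<and> card Z = 2 ^ n \<and> right_act_set n Z \<alpha> \<and> faithful_on n Z \<alpha>"
proof -
  obtain e where e: "bij_betw e (Pow {1..n}) {0..<card (Pow {1..n})}"
    using ex_bij_betw_finite_nat[of "Pow {1..n}"] by auto
  have "card {0..<card (Pow {1..n})} = 2 ^ n" by (simp add: card_Pow)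
  then show ?thesis
    using right_act_set_transfer[OF e right_act_set_pow_act]
      faithful_on_transfer[OF e right_act_set_pow_act faithful_on_pow_act]
    by blast
qed

lemma faithful_on_card_ge:
  fixes X :: "'x set"
  assumes "n \<ge> 2" and "finite X" and "right_act_set n X act" and "faithful_on n X act"
  shows "2 ^ n \<le> card X"
proof -
  obtain Y and \<phi> :: "nat set \<Rightarrow> 'x"
    where Y: "Y \<subseteq> X" and \<phi>: "bij_betw \<phi> (Pow {1..n}) Y"
    using pow_act_embeds_into_faithful[OF assms(1,3,4)] by blast
  have "card Y = 2 ^ n" using bij_betw_same_card[OF \<phi>] by (simp add: card_Pow)
  then show ?thesis using card_mono[OF assms(2) Y] by simp
qed

lemma min_degree_eq_2_pow:
  assumes "n \<ge> 2"
  shows "min_degree n = 2 ^ n"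
  unfolding min_degree_def
proof (rule Least_equality)
  show "\<exists>(Z::nat set) \<alpha>. finite Z \<and> card Z = 2 ^ n \<and> right_act_set n Z \<alpha> \<and> faithful_on n Z \<alpha>"
    by (rule ex_faithful_nat_action_card_2_pow)
  fix k
  assume "\<exists>(Z::nat set) \<alpha>. finite Z \<and> card Z = k \<and> right_act_set n Z \<alpha> \<and> faithful_on n Z \<alpha>"
  then obtain Z :: "nat set" and \<alpha> where
    "finite Z" "card Z = k" "right_act_set n Z \<alpha>" "faithful_on n Z \<alpha>"
    by blast
  then show "2 ^ n \<le> k" using faithful_on_card_ge[OF assms, of Z \<alpha>] by simp
qed

theorem theorem3p2:
  fixes n :: nat and X :: "'x set" and act :: "'x \<Rightarrow> (nat \<Rightarrow> nat) \<Rightarrow> 'x"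
  assumes "n \<ge> 2"
    and "right_act_set n X act"
    and "faithful_on n X act"
  shows "(\<exists>Y (\<phi>::nat set \<Rightarrow> 'x). Y \<subseteq> X \<and> (\<forall>y\<in>Y. \<forall>f\<in>Tn n. act y f \<in> Y) \<and>
            bij_betw \<phi> (Pow {1..n}) Y \<and>
            (\<forall>A\<in>Pow {1..n}. \<forall>f\<in>Tn n. \<phi> (pow_act n A f) = act (\<phi> A) f))
         \<and> min_degree n = 2 ^ n"
  by (intro conjI pow_act_embeds_into_faithful[OF assms] min_degree_eq_2_pow[OF assms(1)])

end
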